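(* Let $m,d,h$ be natural numbers with $d\geqslant h\geqslant m+2$, and let $c,C$ be positive constants. Let $\Xi:\mathbb{R}^h\to\mathbb{R}^d$ be a linear map and $L:\mathbb{R}^h\to\mathbb{R}^m$ a surjective linear map, with $\Vert\Xi\Vert_\infty\leqslant C$ and $\operatorname{dist}((\Xi,L),V^*_{\mathrm{degen},2}(m,d,h))\geqslant c$. Let $K=\ker L$, choose any orthonormal basis $\{\mathbf v^{(1)},\dots,\mathbf v^{(h-m)}\}$ of $K$, and let $\Phi:\mathbb{R}^{h-m}\to K$ be $\Phi(\mathbf x)=\sum_{i=1}^{h-m}x_i\mathbf v^{(i)}$. Then $\Vert\Xi\Phi\Vert_\infty=O(C)$ and $\operatorname{dist}(\Xi\Phi,V_{\mathrm{degen}}(h-m,d))=\Omega(c)$.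
   Context: Matrices identified with linear maps; $\Vert\cdot\Vert_\infty$ max absolute entry; $\operatorname{dist}$ is $\ell^\infty$ distance on entries. $V^*_{\mathrm{degen},2}(m,d,h)$: pairs $(\Xi,L)$ with $\Xi:\mathbb{R}^h\to\mathbb{R}^d$, $L:\mathbb{R}^h\to\mathbb{R}^m$ linear, such that for some $i,j\leqslant d$ and $\lambda\in\mathbb{R}$, $\mathbf e_i^*-\lambda\mathbf e_j^*\neq0$ and $\Xi^*(\mathbf e_i^*-\lambda\mathbf e_j^* )\in L^*((\mathbb{R}^m)^* )$ ($\mathbf e_i^*$ the standard dual basis of $(\mathbb{R}^d)^*$, $\Xi^*\varphi=\varphi\circ\Xi$). $\operatorname{dist}((\Xi,L),V^*_{\mathrm{degen},2}(m,d,h))\geqslant c$ means $(\Xi+Q,L)\notin V^*_{\mathrm{degen},2}(m,d,h)$ for all linear $Q:\mathbb{R}^h\to\mathbb{R}^d$ with $\Vert Q\Vert_\infty<c$. $V_{\mathrm{degen}}(n,d)$ is the set of linear maps $\Psi=(\psi_1,\dots,\psi_d):\mathbb{R}^n\to\mathbb{R}^d$ (systems of linear forms) such that for some $i$, every partition $\mathcal P_i$ of $[d]\setminus\{i\}$ has a part $\mathcal C$ with $\psi_i\in\mathrm{span}(\psi_j:j\in\mathcal C)$; equivalently, for some $i\neq j$, $\psi_i$ is a real multiple of $\psi_j$. Implied constants depend only on $m,d,h$. *)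

theory Defs
  imports Complex_Main "HOL-Library.Disjoint_Sets"
begin

text \<open>Matrices are represented as functions nat => nat => real; a (p x q)-matrix M
  (a linear map from R^q to R^p) only uses the entries M i k with i < p, k < q.
  Vectors in R^n are functions nat => real using only indices below n.\<close>

definition mnorm :: "nat \<Rightarrow> nat \<Rightarrow> (nat \<Rightarrow> nat \<Rightarrow> real) \<Rightarrow> real" where
  "mnorm p q M = Max (insert 0 {\<bar>M i k\<bar> | i k. i < p \<and> k < q})"

definition matmul :: "nat \<Rightarrow> (nat \<Rightarrow> nat \<Rightarrow> real) \<Rightarrow> (nat \<Rightarrow> nat \<Rightarrow> real) \<Rightarrow> nat \<Rightarrow> nat \<Rightarrow> real" where
  "matmul q A B = (\<lambda>i r. \<Sum>k<q. A i k * B k r)"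

definition surj_mat :: "nat \<Rightarrow> nat \<Rightarrow> (nat \<Rightarrow> nat \<Rightarrow> real) \<Rightarrow> bool" where
  "surj_mat p q L \<longleftrightarrow> (\<forall>y::nat \<Rightarrow> real. \<exists>x::nat \<Rightarrow> real. \<forall>i<p. (\<Sum>k<q. L i k * x k) = y i)"

text \<open>V*_degen,2(m,d,h): Xi is d x h, L is m x h. For some i,j < d and lambda,
  e_i^* - lambda e_j^* is nonzero and Xi^*(e_i^* - lambda e_j^*) = L^* phi for some phi in (R^m)^*.\<close>
definition Vstar_degen2 :: "nat \<Rightarrow> nat \<Rightarrow> nat \<Rightarrow> (nat \<Rightarrow> nat \<Rightarrow> real) \<Rightarrow> (nat \<Rightarrow> nat \<Rightarrow> real) \<Rightarrow> bool" where
  "Vstar_degen2 m d h Xi L \<longleftrightarrow>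
     (\<exists>i<d. \<exists>j<d. \<exists>lam::real.
        (\<exists>t<d. (if t = i then 1 else 0) - lam * (if t = j then 1 else 0) \<noteq> 0) \<and>
        (\<exists>\<phi>::nat \<Rightarrow> real. \<forall>k<h. Xi i k - lam * Xi j k = (\<Sum>l<m. \<phi> l * L l k)))"

definition dist_Vstar_ge :: "nat \<Rightarrow> nat \<Rightarrow> nat \<Rightarrow> (nat \<Rightarrow> nat \<Rightarrow> real) \<Rightarrow> (nat \<Rightarrow> nat \<Rightarrow> real) \<Rightarrow> real \<Rightarrow> bool" where
  "dist_Vstar_ge m d h Xi L c \<longleftrightarrow>
     (\<forall>Q. mnorm d h Q < c \<longrightarrow> \<not> Vstar_degen2 m d h (\<lambda>i k. Xi i k + Q i k) L)"

text \<open>V_degen(n,d): Psi is d x n with rows psi_1..psi_d (linear forms on R^n).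
  For some i, every partition of [d] minus {i} has a part C with psi_i in span(psi_j : j in C).\<close>
definition in_span :: "nat \<Rightarrow> (nat \<Rightarrow> nat \<Rightarrow> real) \<Rightarrow> nat set \<Rightarrow> nat \<Rightarrow> bool" where
  "in_span n Psi C i \<longleftrightarrow> (\<exists>a::nat \<Rightarrow> real. \<forall>k<n. Psi i k = (\<Sum>j\<in>C. a j * Psi j k))"

definition V_degen :: "nat \<Rightarrow> nat \<Rightarrow> (nat \<Rightarrow> nat \<Rightarrow> real) \<Rightarrow> bool" where
  "V_degen n d Psi \<longleftrightarrow>
     (\<exists>i<d. \<forall>P. partition_on ({..<d} - {i}) P \<longrightarrow> (\<exists>C\<in>P. in_span n Psi C i))"

definition dist_Vdegen_ge :: "nat \<Rightarrow> nat \<Rightarrow> (nat \<Rightarrow> nat \<Rightarrow> real) \<Rightarrow> real \<Rightarrow> bool" where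
  "dist_Vdegen_ge n d Psi c \<longleftrightarrow>
     (\<forall>Q. mnorm d n Q < c \<longrightarrow> \<not> V_degen n d (\<lambda>i k. Psi i k + Q i k))"

definition orthonormal_kernel_basis :: "nat \<Rightarrow> nat \<Rightarrow> (nat \<Rightarrow> nat \<Rightarrow> real) \<Rightarrow> (nat \<Rightarrow> nat \<Rightarrow> real) \<Rightarrow> bool" where
  "orthonormal_kernel_basis m h L v \<longleftrightarrow>
     (\<forall>r<h-m. \<forall>s<h-m. (\<Sum>k<h. v r k * v s k) = (if r = s then 1 else 0)) \<and>
     (\<forall>r<h-m. \<forall>i<m. (\<Sum>k<h. L i k * v r k) = 0) \<and>
     (\<forall>x::nat \<Rightarrow> real. (\<forall>i<m. (\<Sum>k<h. L i k * x k) = 0) \<longrightarrow>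
        (\<exists>a::nat \<Rightarrow> real. \<forall>k<h. x k = (\<Sum>r<h-m. a r * v r k)))"

text \<open>Phi : R^(h-m) -> K, Phi x = sum_r x_r v_r, as an h x (h-m) matrix.\<close>
definition Phi_mat :: "(nat \<Rightarrow> nat \<Rightarrow> real) \<Rightarrow> nat \<Rightarrow> nat \<Rightarrow> real" where
  "Phi_mat v = (\<lambda>k r. v r k)"

end

theory Submission
  imports Defs
begin

text \<open>Orthonormal vectors have entries of absolute value at most 1, so multiplying by \<open>\<Phi>\<close>
  or by its transpose inflates the maximal entry by at most a factor \<open>h\<close>; this gives the
  bound on \<open>\<Xi>\<Phi>\<close>. For the distance, suppose rows \<open>i\<close> and \<open>\<lambda>\<close> times row \<open>j\<close> of
  \<open>\<Xi>\<Phi> + Q\<close> agree. Since \<open>\<Phi>\<^sup>T\<Phi> = I\<close>, the lifted perturbation \<open>Q' = Q\<Phi>\<^sup>T\<close> satisfies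
  \<open>(\<Xi> + Q')\<Phi> = \<Xi>\<Phi> + Q\<close>, so the functional \<open>(e\<^sub>i\<^sup>* - \<lambda>e\<^sub>j\<^sup>*)(\<Xi> + Q')\<close> vanishes on
  \<open>ker L\<close> and therefore lies in the image of \<open>L\<^sup>*\<close>, i.e. \<open>(\<Xi> + Q', L)\<close> is degenerate.
  As \<open>\<parallel>Q'\<parallel>\<^sub>\<infinity> \<le> h \<parallel>Q\<parallel>\<^sub>\<infinity>\<close>, this forces \<open>\<parallel>Q\<parallel>\<^sub>\<infinity> \<ge> c / h\<close>.\<close>

lemma finite_mnorm_entries:
  fixes M :: "nat \<Rightarrow> nat \<Rightarrow> real" and p q :: nat
  shows "finite {\<bar>M i k\<bar> | i k. i < p \<and> k < q}"
  by (rule finite_image_set2) (simp_all add: finite_Collect_less_nat)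

lemma abs_le_mnorm: "i < p \<Longrightarrow> k < q \<Longrightarrow> \<bar>M i k\<bar> \<le> mnorm p q M"
  unfolding mnorm_def by (rule Max_ge) (use finite_mnorm_entries in auto)

lemma mnorm_nonneg: "0 \<le> mnorm p q M"
  unfolding mnorm_def by (rule Max_ge) (use finite_mnorm_entries in auto)

lemma mnorm_leI:
  assumes "0 \<le> B" and "\<And>i k. i < p \<Longrightarrow> k < q \<Longrightarrow> \<bar>M i k\<bar> \<le> B"
  shows "mnorm p q M \<le> B"
  unfolding mnorm_def using assms finite_mnorm_entries[of M p q] by (subst Max_le_iff) auto

lemma mnorm_matmul_le:
  assumes "\<And>k j. k < q \<Longrightarrow> j < r \<Longrightarrow> \<bar>B k j\<bar> \<le> 1"
  shows "mnorm p r (matmul q A B) \<le> real q * mnorm p q A"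
proof (rule mnorm_leI)
  show "0 \<le> real q * mnorm p q A" by (simp add: mnorm_nonneg)
  fix i j assume i: "i < p" and j: "j < r"
  have "\<bar>matmul q A B i j\<bar> \<le> (\<Sum>k<q. \<bar>A i k\<bar> * \<bar>B k j\<bar>)"
    unfolding matmul_def abs_mult[symmetric] by (rule sum_abs)
  also have "\<dots> \<le> (\<Sum>k<q. mnorm p q A * 1)"
  proof (rule sum_mono)
    fix k assume "k \<in> {..<q}"
    then show "\<bar>A i k\<bar> * \<bar>B k j\<bar> \<le> mnorm p q A * 1"
      using abs_le_mnorm[OF i, of k q A] assms[OF _ j, of k] by (intro mult_mono) (auto simp: mnorm_nonneg)
  qed
  finally show "\<bar>matmul q A B i j\<bar> \<le> real q * mnorm p q A" by simp
qed

lemma abs_le_1_if_orthonormal: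
  fixes v :: "nat \<Rightarrow> nat \<Rightarrow> real"
  assumes "\<forall>r<n. \<forall>s<n. (\<Sum>k<h. v r k * v s k) = (if r = s then 1 else 0)"
    and "r < n" and "k < h"
  shows "\<bar>v r k\<bar> \<le> 1"
proof -
  have "v r k * v r k \<le> (\<Sum>k<h. v r k * v r k)"
    by (rule member_le_sum) (use assms in auto)
  also have "\<dots> = 1" using assms by simp
  finally have "(v r k)\<^sup>2 \<le> 1" by (simp add: power2_eq_square)
  then show ?thesis by (simp add: abs_square_le_1)
qed

text \<open>\<open>Phi_mat v\<close> is the transpose of \<open>v\<close>, so this says \<open>(Q\<Phi>\<^sup>T)\<Phi> = Q\<close>.\<close>
lemma matmul_orthonormal_Phi:
  fixes v :: "nat \<Rightarrow> nat \<Rightarrow> real"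
  assumes on: "\<forall>r<n. \<forall>s<n. (\<Sum>k<h. v r k * v s k) = (if r = s then 1 else 0)"
    and r: "r < n"
  shows "matmul h (matmul n Q v) (Phi_mat v) i r = Q i r"
proof -
  have "matmul h (matmul n Q v) (Phi_mat v) i r = (\<Sum>s<n. Q i s * (\<Sum>t<h. v s t * v r t))"
    unfolding matmul_def Phi_mat_def
    by (simp add: sum_distrib_left sum_distrib_right sum.swap[of _ "{..<h}"] algebra_simps)
  also have "\<dots> = (\<Sum>s<n. Q i s * (if s = r then 1 else 0))"
    using on r by (intro sum.cong refl) simp
  also have "\<dots> = Q i r" using r by (simp add: if_distrib cong: if_cong)
  finally show ?thesis .
qed

lemma V_degen_imp_proportional_rows:
  assumes "V_degen n d Psi"
  shows "\<exists>i<d. \<exists>j<d. i \<noteq> j \<and> (\<exists>a. \<forall>k<n. Psi i k = a * Psi j k)"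
proof -
  obtain i where i: "i < d"
    and span: "\<And>P. partition_on ({..<d} - {i}) P \<Longrightarrow> \<exists>C\<in>P. in_span n Psi C i"
    using assms unfolding V_degen_def by blast
  have "partition_on ({..<d} - {i}) ((\<lambda>j. {j}) ` ({..<d} - {i}))"
    unfolding partition_on_def disjoint_def by auto
  then obtain j where "j \<in> {..<d} - {i}" and "in_span n Psi {j} i"
    using span by blast
  then show ?thesis using i unfolding in_span_def by auto
qed

text \<open>The coefficients come from a right inverse \<open>X\<close> of \<open>L\<close>: for each \<open>k\<close>, the vector
  \<open>e\<^sub>k - X L e\<^sub>k\<close> lies in \<open>ker L\<close>.\<close>
lemma functional_vanishing_on_kernel_factors:
  fixes L :: "nat \<Rightarrow> nat \<Rightarrow> real" and w :: "nat \<Rightarrow> real"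
  assumes surj: "surj_mat m h L"
    and vanish: "\<And>x. (\<forall>i<m. (\<Sum>t<h. L i t * x t) = 0) \<Longrightarrow> (\<Sum>t<h. w t * x t) = 0"
  shows "\<exists>\<phi>. \<forall>k<h. w k = (\<Sum>l<m. \<phi> l * L l k)"
proof -
  have "\<forall>l. \<exists>x. \<forall>i<m. (\<Sum>t<h. L i t * x t) = (if i = l then 1 else 0)"
    using surj unfolding surj_mat_def by (intro allI) (erule allE[of _ "\<lambda>i. if i = _ then 1 else 0"])
  then have "\<exists>X. \<forall>l. \<forall>i<m. (\<Sum>t<h. L i t * X l t) = (if i = l then 1 else 0)"
    by (rule choice)
  then obtain X where X: "\<forall>l. \<forall>i<m. (\<Sum>t<h. L i t * X l t) = (if i = l then 1 else 0)"
    by blast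
  have "w k = (\<Sum>l<m. (\<Sum>t<h. w t * X l t) * L l k)" if k: "k < h" for k
  proof -
    define u where "u t = (if t = k then 1 else 0) - (\<Sum>l<m. X l t * L l k)" for t
    have delta: "(\<Sum>t<h. f t * (if t = k then 1 else 0)) = f k" for f :: "nat \<Rightarrow> real"
      using k by (simp add: if_distrib cong: if_cong)
    have "(\<Sum>t<h. L i t * u t) = 0" if i: "i < m" for i
    proof -
      have "(\<Sum>t<h. L i t * (\<Sum>l<m. X l t * L l k)) = (\<Sum>l<m. L l k * (\<Sum>t<h. L i t * X l t))"
        by (simp add: sum_distrib_left sum_distrib_right sum.swap[of _ "{..<h}"] algebra_simps)
      also have "\<dots> = (\<Sum>l<m. L l k * (if i = l then 1 else 0))"
        using i by (intro sum.cong refl) (simp add: X)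
      also have "\<dots> = L i k"
        using i by (simp add: if_distrib cong: if_cong)
      finally show ?thesis
        unfolding u_def by (simp add: right_diff_distrib sum_subtractf delta)
    qed
    then have "(\<Sum>t<h. w t * u t) = 0" by (intro vanish) blast
    moreover have "(\<Sum>t<h. w t * (\<Sum>l<m. X l t * L l k)) = (\<Sum>l<m. (\<Sum>t<h. w t * X l t) * L l k)"
      by (simp add: sum_distrib_left sum_distrib_right sum.swap[of _ "{..<h}"] algebra_simps)
    ultimately show ?thesis
      unfolding u_def by (simp add: right_diff_distrib sum_subtractf delta)
  qed
  then show ?thesis by (intro exI[of _ "\<lambda>l. \<Sum>t<h. w t * X l t"]) blast
qed

lemma vanishing_on_kernel_if_orthogonal_to_basis:
  fixes L v :: "nat \<Rightarrow> nat \<Rightarrow> real" and w :: "nat \<Rightarrow> real"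
  assumes "orthonormal_kernel_basis m h L v"
    and orth: "\<And>r. r < h - m \<Longrightarrow> (\<Sum>t<h. w t * v r t) = 0"
    and x: "\<forall>i<m. (\<Sum>t<h. L i t * x t) = 0"
  shows "(\<Sum>t<h. w t * x t) = 0"
proof -
  obtain a where a: "\<And>t. t < h \<Longrightarrow> x t = (\<Sum>r<h-m. a r * v r t)"
    using assms(1) x unfolding orthonormal_kernel_basis_def by blast
  have "(\<Sum>t<h. w t * x t) = (\<Sum>t<h. w t * (\<Sum>r<h-m. a r * v r t))"
    using a by (intro sum.cong) auto
  also have "\<dots> = (\<Sum>r<h-m. a r * (\<Sum>t<h. w t * v r t))"
    by (simp add: sum_distrib_left sum.swap[of _ "{..<h}"] algebra_simps)
  also have "\<dots> = 0" using orth by simp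
  finally show ?thesis .
qed

lemma dist_Vdegen_ge_restrict_to_kernel:
  assumes surj: "surj_mat m h L"
    and ob: "orthonormal_kernel_basis m h L v"
    and far: "dist_Vstar_ge m d h Xi L c"
  shows "dist_Vdegen_ge (h - m) d (matmul h Xi (Phi_mat v)) (c / real h)"
  unfolding dist_Vdegen_ge_def
proof (intro allI impI notI)
  define n where "n = h - m"
  define Psi where "Psi = matmul h Xi (Phi_mat v)"
  fix Q assume Q: "mnorm d (h - m) Q < c / real h"
    and degen: "V_degen (h - m) d (\<lambda>i k. matmul h Xi (Phi_mat v) i k + Q i k)"
  have on: "\<forall>r<n. \<forall>s<n. (\<Sum>k<h. v r k * v s k) = (if r = s then 1 else 0)"
    using ob unfolding orthonormal_kernel_basis_def n_def by blast
  obtain i j a where i: "i < d" and j: "j < d" and "i \<noteq> j"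
    and proportional: "\<forall>k<n. Psi i k + Q i k = a * (Psi j k + Q j k)"
    using V_degen_imp_proportional_rows[OF degen] unfolding n_def Psi_def by blast
  define Q' where "Q' = matmul n Q v"
  have "0 < real h"
    using Q mnorm_nonneg[of d n Q] by (cases "h = 0") (auto simp: n_def)
  have "mnorm d h Q' \<le> real n * mnorm d n Q"
    unfolding Q'_def by (rule mnorm_matmul_le) (use abs_le_1_if_orthonormal[OF on] in blast)
  also have "\<dots> \<le> real h * mnorm d n Q"
    by (intro mult_right_mono) (auto simp: n_def mnorm_nonneg)
  also have "\<dots> < real h * (c / real h)"
    using Q \<open>0 < real h\<close> by (intro mult_strict_left_mono) (simp_all add: n_def)
  finally have Q'_small: "mnorm d h Q' < c"
    using \<open>0 < real h\<close> by simp
  define w where "w t = (Xi i t + Q' i t) - a * (Xi j t + Q' j t)" for t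
  have lift: "(\<Sum>t<h. (Xi l t + Q' l t) * v r t) = Psi l r + Q l r" if r: "r < n" for l r
  proof -
    have "(\<Sum>t<h. Q' l t * v r t) = Q l r"
      using matmul_orthonormal_Phi[OF on r, of Q l] by (simp add: Q'_def matmul_def Phi_mat_def)
    then show ?thesis
      by (simp add: Psi_def matmul_def Phi_mat_def distrib_right sum.distrib)
  qed
  have orth: "(\<Sum>t<h. w t * v r t) = 0" if r: "r < h - m" for r
  proof -
    have "(\<Sum>t<h. w t * v r t)
        = (\<Sum>t<h. (Xi i t + Q' i t) * v r t) - a * (\<Sum>t<h. (Xi j t + Q' j t) * v r t)"
      unfolding w_def by (simp add: left_diff_distrib sum_subtractf sum_distrib_left mult.assoc)
    then show ?thesis using lift[of r i] lift[of r j] proportional r by (simp add: n_def)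
  qed
  obtain \<phi> where \<phi>: "\<forall>k<h. w k = (\<Sum>l<m. \<phi> l * L l k)"
    using functional_vanishing_on_kernel_factors[OF surj
        vanishing_on_kernel_if_orthogonal_to_basis[OF ob orth]] by blast
  have "\<exists>t<d. (if t = i then 1 else 0) - a * (if t = j then 1 else 0) \<noteq> (0::real)"
    using i \<open>i \<noteq> j\<close> by (intro exI[of _ i]) simp
  moreover have "\<exists>\<phi>. \<forall>k<h. Xi i k + Q' i k - a * (Xi j k + Q' j k) = (\<Sum>l<m. \<phi> l * L l k)"
    using \<phi> unfolding w_def by blast
  ultimately have "Vstar_degen2 m d h (\<lambda>i k. Xi i k + Q' i k) L"
    unfolding Vstar_degen2_def using i j by blast
  with far Q'_small show False unfolding dist_Vstar_ge_def by blast
qed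

theorem lemma7p2:
  fixes m d h :: nat
  assumes "m + 2 \<le> h" and "h \<le> d"
  shows "\<exists>K1>0. \<exists>K2>0. \<forall>(c::real) (C::real) Xi L v.
           c > 0 \<longrightarrow> C > 0 \<longrightarrow> surj_mat m h L \<longrightarrow> mnorm d h Xi \<le> C \<longrightarrow>
           dist_Vstar_ge m d h Xi L c \<longrightarrow> orthonormal_kernel_basis m h L v \<longrightarrow>
           mnorm d (h - m) (matmul h Xi (Phi_mat v)) \<le> K1 * C \<and>
           dist_Vdegen_ge (h - m) d (matmul h Xi (Phi_mat v)) (K2 * c)"
proof (rule exI[of _ "real h"], intro conjI exI[of _ "1 / real h"] allI impI)
  show "0 < real h" and "0 < 1 / real h" using assms(1) by auto
  fix c C :: real and Xi L v :: "nat \<Rightarrow> nat \<Rightarrow> real"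
  assume "c > 0" and "C > 0" and "mnorm d h Xi \<le> C" and surj: "surj_mat m h L"
    and far: "dist_Vstar_ge m d h Xi L c" and ob: "orthonormal_kernel_basis m h L v"
  have on: "\<forall>r<h-m. \<forall>s<h-m. (\<Sum>k<h. v r k * v s k) = (if r = s then 1 else 0)"
    using ob unfolding orthonormal_kernel_basis_def by blast
  have "mnorm d (h - m) (matmul h Xi (Phi_mat v)) \<le> real h * mnorm d h Xi"
    by (rule mnorm_matmul_le) (simp add: Phi_mat_def abs_le_1_if_orthonormal[OF on])
  also have "\<dots> \<le> real h * C" using \<open>mnorm d h Xi \<le> C\<close> by (simp add: mult_left_mono)
  finally show "mnorm d (h - m) (matmul h Xi (Phi_mat v)) \<le> real h * C" .
  show "dist_Vdegen_ge (h - m) d (matmul h Xi (Phi_mat v)) (1 / real h * c)"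
    using dist_Vdegen_ge_restrict_to_kernel[OF surj ob far] by simp
qed

end
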